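(* Let $\alpha,\beta<1$ be real numbers (not necessarily positive). Let $A,B\subset\mathbb{N}$ be such that $A(X)\le C\frac{\sqrt{X}}{(\log X)^{\alpha}}$ and $B(X)\le C\frac{\sqrt{X}}{(\log X)^{\beta}}$ for some constant $C>0$ and all sufficiently large $X$. Then there is a constant $C'>0$ such that for all sufficiently large $X$, $$(AB)(X)\le \sum_{\substack{a\in A,\ b\in B\\ ab\le X}}1\le C'\sqrt{X}(\log X)^{1-\alpha-\beta}.$$
   Context: $\mathbb{N}$ is the set of positive integers; $AB=\{ab:a\in A,b\in B\}$; for $S\subset\mathbb{N}_0$, $S(X)=|S\cap[1,X]|$. *)

theory Defs
  imports Complex_Main
begin

definition setmul :: "nat set \<Rightarrow> nat set \<Rightarrow> nat set" where
  "setmul A B = {a * b | a b. a \<in> A \<and> b \<in> B}"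

definition cnt :: "nat set \<Rightarrow> real \<Rightarrow> nat" where
  "cnt S X = card {n \<in> S. 1 \<le> n \<and> real n \<le> X}"

end

theory Submission
  imports Defs
begin

text \<open>Split the pairs with \<open>ab \<le> X\<close> according to whether \<open>a \<le> sqrt X\<close> or \<open>b \<le> sqrt X\<close>.
  The pairs with \<open>a \<le> sqrt X\<close> number \<open>\<Sum>\<^sub>a B(X/a)\<close>, and for such \<open>a\<close> we have
  \<open>log (X/a) \<ge> log X / 2\<close>, so each term is \<open>O(sqrt X (log X)\<^sup>-\<^sup>\<beta> / sqrt a)\<close>. It remains to
  show that the sum of \<open>1 / sqrt a\<close> over \<open>a \<in> A, a \<le> Y\<close> is \<open>O((log Y)\<^sup>1\<^sup>-\<^sup>\<alpha>)\<close>. Over the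
  dyadic block \<open>(2\<^sup>n, 2\<^sup>n\<^sup>+\<^sup>1]\<close> this sum is at most \<open>A(2\<^sup>n\<^sup>+\<^sup>1) / 2\<^sup>n\<^sup>/\<^sup>2 = O(n\<^sup>-\<^sup>\<alpha>)\<close>, and
  the partial sums of \<open>k\<^sup>-\<^sup>\<alpha>\<close> up to \<open>n\<close> are \<open>O(n\<^sup>1\<^sup>-\<^sup>\<alpha>)\<close> because \<open>\<alpha> < 1\<close>.\<close>

lemma powr_neg_le_diff_powr:
  fixes a x :: real
  assumes "a < 1" "x \<ge> 0"
  shows "(x + 1) powr (-a) \<le> max 1 (1 / (1 - a)) * ((x + 1) powr (1 - a) - x powr (1 - a))"
proof (cases "a \<le> 0")
  case True
  have e1: "(x + 1) powr (1 - a) = (x + 1) * (x + 1) powr (-a)"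
    by (simp add: powr_add[of "x + 1" 1 "-a", simplified] assms)
  have e2: "x powr (1 - a) = x * x powr (-a)"
    using powr_add[of x 1 "-a"] assms(2) by (cases "x = 0") auto
  have "x powr (-a) \<le> (x + 1) powr (-a)"
    using True assms by (intro powr_mono2) auto
  then have "x * x powr (-a) \<le> x * (x + 1) powr (-a)"
    using assms by (intro mult_left_mono) auto
  then have diff: "(x + 1) powr (-a) \<le> (x + 1) powr (1 - a) - x powr (1 - a)"
    unfolding e1 e2 by (simp add: algebra_simps)
  moreover have "(x + 1) powr (1 - a) - x powr (1 - a) \<ge> 0"
    using diff by (meson order_trans powr_ge_zero)
  ultimately show ?thesis
    by (smt (verit) max.cobounded1 mult_right_mono mult_cancel_right1)
next
  case False
  show ?thesis
  proof (cases "x = 0")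
    case x0: False
    with assms have "x > 0" by simp
    then obtain z where z: "x < z" "z < x + 1"
      "(x + 1) powr (1 - a) - x powr (1 - a) = ((x + 1) - x) * ((1 - a) * z powr ((1 - a) - 1))"
      using MVT2[of x "x + 1" "\<lambda>t. t powr (1 - a)" "\<lambda>t. (1 - a) * t powr ((1 - a) - 1)"]
        has_real_derivative_powr[of _ "1 - a"] by auto
    have "(x + 1) powr (-a) \<le> z powr (-a)"
      using False z \<open>x > 0\<close> by (intro powr_mono2') auto
    then have "(x + 1) powr (-a) \<le> (1 / (1 - a)) * ((x + 1) powr (1 - a) - x powr (1 - a))"
      using z(3) assms(1) by simp
    also have "\<dots> \<le> max 1 (1 / (1 - a)) * ((x + 1) powr (1 - a) - x powr (1 - a))"
      using z(3) assms(1) by (intro mult_right_mono) auto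
    finally show ?thesis .
  qed simp
qed

lemma powr_bound_of_increments:
  fixes F :: "nat \<Rightarrow> real" and a D :: real
  assumes "a < 1" "D \<ge> 0"
    and step: "\<And>n. k \<le> n \<Longrightarrow> F (Suc n) \<le> F n + D * (real n + 1) powr (-a)"
    and "k \<le> n"
  shows "F n \<le> F k + D * max 1 (1 / (1 - a)) * real n powr (1 - a)"
  using \<open>k \<le> n\<close>
proof (induction n rule: dec_induct)
  case base
  then show ?case using assms(2) by simp
next
  case (step n)
  let ?M = "max 1 (1 / (1 - a))"
  have "F (Suc n) \<le> F n + D * (real n + 1) powr (-a)"
    using assms(3) step by blast
  also have "\<dots> \<le> F k + D * ?M * real n powr (1 - a)
      + D * (?M * ((real n + 1) powr (1 - a) - real n powr (1 - a)))"
    using step powr_neg_le_diff_powr[OF assms(1), of "real n"] assms(2)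
    by (intro add_mono mult_left_mono) auto
  also have "\<dots> = F k + D * ?M * real (Suc n) powr (1 - a)"
    by (simp add: algebra_simps)
  finally show ?case .
qed

lemma one_div_powr_le_of_half_le:
  fixes u L b :: real
  assumes "L > 0" "L / 2 \<le> u" "u \<le> L"
  shows "1 / u powr b \<le> 2 powr \<bar>b\<bar> * L powr (-b)"
proof -
  have "1 / u powr b = u powr (-b)"
    by (simp add: powr_minus divide_inverse)
  moreover have "u powr (-b) \<le> 2 powr \<bar>b\<bar> * L powr (-b)"
  proof (cases "b \<ge> 0")
    case True
    have "u powr (-b) \<le> (L / 2) powr (-b)"
      using True assms by (intro powr_mono2') auto
    also have "(L / 2) powr (-b) = 2 powr b * L powr (-b)"
      using assms by (simp add: powr_divide powr_minus field_simps)
    finally show ?thesis using True by simp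
  next
    case False
    have "u powr (-b) \<le> L powr (-b)"
      using False assms by (intro powr_mono2) auto
    also have "\<dots> \<le> 2 powr \<bar>b\<bar> * L powr (-b)"
      using ge_one_powr_ge_zero[of 2 "\<bar>b\<bar>"] by (simp add: mult_le_cancel_right1)
    finally show ?thesis .
  qed
  ultimately show ?thesis by simp
qed

lemma sqrt_div_ln_powr_le:
  fixes X x b :: real
  assumes "1 < X" "1 \<le> x" "x \<le> sqrt X"
  shows "sqrt (X / x) / ln (X / x) powr b \<le> 2 powr \<bar>b\<bar> * ln X powr (-b) * sqrt X * (1 / sqrt x)"
proof -
  have "ln x \<le> ln (sqrt X)"
    using assms by (intro ln_mono) auto
  moreover have "ln (sqrt X) = ln X / 2" and "ln (X / x) = ln X - ln x"
    using assms by (simp_all add: ln_sqrt ln_div)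
  moreover have "ln x \<ge> 0" "ln X > 0"
    using assms by auto
  ultimately have "1 / ln (X / x) powr b \<le> 2 powr \<bar>b\<bar> * ln X powr (-b)"
    by (intro one_div_powr_le_of_half_le) auto
  then have "sqrt X / sqrt x * (1 / ln (X / x) powr b)
      \<le> sqrt X / sqrt x * (2 powr \<bar>b\<bar> * ln X powr (-b))"
    using assms by (intro mult_left_mono) auto
  then show ?thesis
    by (simp add: real_sqrt_divide mult_ac)
qed


definition recip_sqrt_sum :: "nat set \<Rightarrow> real \<Rightarrow> real" where
  "recip_sqrt_sum A Y = (\<Sum>n\<in>{n\<in>A. 1 \<le> n \<and> real n \<le> Y}. 1 / sqrt (real n))"

lemma finite_bounded_nat_set: "finite {n\<in>A. 1 \<le> n \<and> real n \<le> Y}"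
  by (rule finite_subset[of _ "{..nat \<lfloor>Y\<rfloor>}"]) (auto intro: le_nat_floor)

lemma recip_sqrt_sum_nonneg: "recip_sqrt_sum A Y \<ge> 0"
  unfolding recip_sqrt_sum_def by (intro sum_nonneg) auto

lemma mono_recip_sqrt_sum: "mono (recip_sqrt_sum A)"
  unfolding recip_sqrt_sum_def
  by (intro monoI sum_mono2[OF finite_bounded_nat_set]) auto

lemma recip_sqrt_sum_dyadic_step:
  "recip_sqrt_sum A (2 ^ Suc n) \<le> recip_sqrt_sum A (2 ^ n) + cnt A (2 ^ Suc n) / sqrt (2 ^ n)"
proof -
  define J where "J = {m\<in>A. 1 \<le> m \<and> 2 ^ n < real m \<and> real m \<le> 2 ^ Suc n}"
  have "real m \<le> 2 ^ n \<Longrightarrow> real m \<le> 2 ^ Suc n" for m :: nat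
    by (smt (verit) one_le_numeral power_increasing le_SucI order_refl)
  then have split: "{m\<in>A. 1 \<le> m \<and> real m \<le> 2 ^ Suc n} = {m\<in>A. 1 \<le> m \<and> real m \<le> 2 ^ n} \<union> J"
    unfolding J_def by (auto simp del: of_nat_le_iff power_Suc)
  have "finite J"
    unfolding J_def by (rule finite_subset[OF _ finite_bounded_nat_set[of A "2 ^ Suc n"]]) auto
  then have "recip_sqrt_sum A (2 ^ Suc n) = recip_sqrt_sum A (2 ^ n) + (\<Sum>m\<in>J. 1 / sqrt (real m))"
    unfolding recip_sqrt_sum_def split
    by (rule sum.union_disjoint[OF finite_bounded_nat_set]) (auto simp: J_def)
  moreover have "(\<Sum>m\<in>J. 1 / sqrt (real m)) \<le> real (card J) * (1 / sqrt (2 ^ n))"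
    by (rule sum_bounded_above) (auto simp: J_def intro!: divide_left_mono)
  moreover have "card J \<le> cnt A (2 ^ Suc n)"
    unfolding cnt_def J_def by (rule card_mono[OF finite_bounded_nat_set]) auto
  then have "real (card J) * (1 / sqrt (2 ^ n)) \<le> cnt A (2 ^ Suc n) / sqrt (2 ^ n)"
    by (simp add: divide_right_mono)
  ultimately show ?thesis by linarith
qed

lemma recip_sqrt_sum_dyadic_bound:
  fixes A :: "nat set" and a C :: real
  assumes "a < 1" "C \<ge> 0"
    and "\<forall>\<^sub>F X in at_top. real (cnt A X) \<le> C * sqrt X / ln X powr a"
  shows "\<exists>K>0. \<forall>\<^sub>F n in sequentially. recip_sqrt_sum A (2 ^ n) \<le> K * real n powr (1 - a)"
proof -
  obtain T where T: "\<And>X. X \<ge> T \<Longrightarrow> real (cnt A X) \<le> C * sqrt X / ln X powr a"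
    using assms(3) unfolding eventually_at_top_linorder by blast
  obtain k :: nat where k: "T < 2 ^ k"
    using real_arch_pow[of 2 T] by auto
  define F where "F n = recip_sqrt_sum A (2 ^ n)" for n
  define D where "D = C * sqrt 2 * ln 2 powr (-a)"
  define M where "M = max 1 (1 / (1 - a))"
  have "D \<ge> 0" "M \<ge> 0"
    unfolding D_def M_def using assms(2) by auto
  have "F (Suc n) \<le> F n + D * (real n + 1) powr (-a)" if "k \<le> n" for n
  proof -
    have "(2::real) ^ k \<le> 2 ^ Suc n"
      using that by (intro power_increasing) auto
    then have "real (cnt A (2 ^ Suc n)) \<le> C * sqrt (2 ^ Suc n) / ln (2 ^ Suc n) powr a"
      using k by (intro T) linarith
    moreover have "C * sqrt (2 ^ Suc n) / ln (2 ^ Suc n) powr a / sqrt (2 ^ n)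
        = D * (real n + 1) powr (-a)"
    proof -
      have "sqrt ((2::real) ^ Suc n) = sqrt 2 * sqrt (2 ^ n)"
        by (simp add: real_sqrt_mult)
      moreover have "ln ((2::real) ^ Suc n) powr a = (real n + 1) powr a * ln 2 powr a"
        using ln_realpow[of 2 "Suc n"] powr_mult[of "real n + 1" "ln 2" a]
        by (simp del: power_Suc add: add.commute)
      ultimately show ?thesis
        unfolding D_def by (simp add: powr_minus field_simps)
    qed
    ultimately have "cnt A (2 ^ Suc n) / sqrt (2 ^ n) \<le> D * (real n + 1) powr (-a)"
      by (metis divide_right_mono real_sqrt_ge_zero zero_le_power zero_le_numeral)
    then show ?thesis
      using recip_sqrt_sum_dyadic_step[of A n] unfolding F_def by linarith
  qed
  then have F_le: "F n \<le> F k + D * M * real n powr (1 - a)" if "k \<le> n" for n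
    unfolding M_def using powr_bound_of_increments[OF assms(1) \<open>D \<ge> 0\<close>] that by blast
  have "F n \<le> (F k + D * M + 1) * real n powr (1 - a)" if "max k 1 \<le> n" for n
  proof -
    have "1 \<le> real n powr (1 - a)"
      using that assms(1) by (intro ge_one_powr_ge_zero) auto
    moreover have "F k \<ge> 0"
      unfolding F_def by (rule recip_sqrt_sum_nonneg)
    ultimately have "F k \<le> F k * real n powr (1 - a)"
      by (simp add: mult_le_cancel_left1)
    then show ?thesis
      using F_le[of n] that \<open>1 \<le> real n powr (1 - a)\<close> by (simp add: algebra_simps)
  qed
  moreover have "F k + D * M + 1 > 0"
    using mult_nonneg_nonneg[OF \<open>D \<ge> 0\<close> \<open>M \<ge> 0\<close>] recip_sqrt_sum_nonneg[of A "2 ^ k"]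
    unfolding F_def by linarith
  ultimately show ?thesis
    unfolding F_def eventually_sequentially by blast
qed

lemma ln_powr_bound_of_dyadic_bound:
  fixes S :: "real \<Rightarrow> real" and e K :: real
  assumes "mono S" "e > 0" "K \<ge> 0"
    and "\<forall>\<^sub>F n in sequentially. S (2 ^ n) \<le> K * real n powr e"
  shows "\<forall>\<^sub>F Y in at_top. S Y \<le> K * (2 / ln 2) powr e * ln Y powr e"
proof -
  obtain N where N: "\<And>n. n \<ge> N \<Longrightarrow> S (2 ^ n) \<le> K * real n powr e"
    using assms(4) unfolding eventually_sequentially by blast
  have "S Y \<le> K * (2 / ln 2) powr e * ln Y powr e" if Y: "Y \<ge> max (2 ^ N) 2" for Y
  proof -
    define n where "n = nat \<lceil>log 2 Y\<rceil>"
    have "log 2 Y \<ge> 1" using Y by simp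
    then have n_lower: "log 2 Y \<le> real n" and n_upper: "real n \<le> 2 * log 2 Y"
      unfolding n_def by linarith+
    have "Y = 2 powr (log 2 Y)" using Y by simp
    also have "\<dots> \<le> 2 ^ n" using n_lower by (simp add: powr_realpow[symmetric])
    finally have "S Y \<le> S (2 ^ n)" by (rule monoD[OF assms(1)])
    moreover have "real N \<le> real n"
      using n_lower Y log_le_cancel_iff[of 2 "2 ^ N" Y] by auto
    then have "S (2 ^ n) \<le> K * real n powr e" by (intro N) simp
    moreover have "real n powr e \<le> (2 / ln 2 * ln Y) powr e"
      using n_upper assms(2) by (intro powr_mono2) (auto simp: log_def)
    moreover have "(2 / ln 2 * ln Y) powr e = (2 / ln 2) powr e * ln Y powr e"
      by (rule powr_mult)
    ultimately show ?thesis
      using assms(3) by (smt (verit) mult.assoc mult_left_mono)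
  qed
  then show ?thesis
    unfolding eventually_at_top_linorder by blast
qed

lemma recip_sqrt_sum_bound:
  fixes A :: "nat set" and a C :: real
  assumes "a < 1" "C \<ge> 0"
    and "\<forall>\<^sub>F X in at_top. real (cnt A X) \<le> C * sqrt X / ln X powr a"
  shows "\<exists>K>0. \<forall>\<^sub>F Y in at_top. recip_sqrt_sum A Y \<le> K * ln Y powr (1 - a)"
proof -
  obtain K where "K > 0"
    and "\<forall>\<^sub>F n in sequentially. recip_sqrt_sum A (2 ^ n) \<le> K * real n powr (1 - a)"
    using recip_sqrt_sum_dyadic_bound[OF assms] by blast
  then have "\<forall>\<^sub>F Y in at_top. recip_sqrt_sum A Y \<le> K * (2 / ln 2) powr (1 - a) * ln Y powr (1 - a)"
    using assms(1) by (intro ln_powr_bound_of_dyadic_bound mono_recip_sqrt_sum) auto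
  moreover have "K * (2 / ln 2) powr (1 - a) > 0"
    using \<open>K > 0\<close> by simp
  ultimately show ?thesis by blast
qed


definition mult_pairs :: "nat set \<Rightarrow> nat set \<Rightarrow> real \<Rightarrow> (nat \<times> nat) set" where
  "mult_pairs A B X = {(a, b). a \<in> A \<and> b \<in> B \<and> real (a * b) \<le> X}"

definition small_mult_pairs :: "nat set \<Rightarrow> nat set \<Rightarrow> real \<Rightarrow> (nat \<times> nat) set" where
  "small_mult_pairs A B X = {p \<in> mult_pairs A B X. real (fst p) \<le> sqrt X}"

lemma finite_mult_pairs:
  assumes "0 \<notin> A" "0 \<notin> B"
  shows "finite (mult_pairs A B X)"
proof (rule finite_subset)
  show "mult_pairs A B X \<subseteq> {..nat \<lfloor>X\<rfloor>} \<times> {..nat \<lfloor>X\<rfloor>}"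
  proof (rule subrelI)
    fix a b assume "(a, b) \<in> mult_pairs A B X"
    then have "a \<in> A" "b \<in> B" "real (a * b) \<le> X"
      unfolding mult_pairs_def by auto
    moreover from this have "a \<noteq> 0" "b \<noteq> 0"
      using assms by (auto intro!: gr0I)
    then have "a \<le> a * b" "b \<le> a * b"
      by simp_all
    ultimately have "real a \<le> X" "real b \<le> X"
      by (meson of_nat_le_iff order_trans)+
    then show "(a, b) \<in> {..nat \<lfloor>X\<rfloor>} \<times> {..nat \<lfloor>X\<rfloor>}"
      by (auto intro: le_nat_floor)
  qed
qed auto

lemma cnt_setmul_le_card_mult_pairs:
  assumes "0 \<notin> A" "0 \<notin> B"
  shows "cnt (setmul A B) X \<le> card (mult_pairs A B X)"
proof -
  have "{n \<in> setmul A B. 1 \<le> n \<and> real n \<le> X} \<subseteq> (\<lambda>(a, b). a * b) ` mult_pairs A B X"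
    unfolding setmul_def mult_pairs_def by auto
  then have "cnt (setmul A B) X \<le> card ((\<lambda>(a, b). a * b) ` mult_pairs A B X)"
    unfolding cnt_def using finite_mult_pairs[OF assms] by (intro card_mono) auto
  also have "\<dots> \<le> card (mult_pairs A B X)"
    by (rule card_image_le[OF finite_mult_pairs[OF assms]])
  finally show ?thesis .
qed

lemma card_mult_pairs_le_small:
  assumes "0 \<notin> A" "0 \<notin> B" "X \<ge> 0"
  shows "card (mult_pairs A B X) \<le> card (small_mult_pairs A B X) + card (small_mult_pairs B A X)"
proof -
  have "mult_pairs A B X \<subseteq> small_mult_pairs A B X \<union> prod.swap ` small_mult_pairs B A X"
  proof (rule subrelI)
    fix a b assume ab: "(a, b) \<in> mult_pairs A B X"
    show "(a, b) \<in> small_mult_pairs A B X \<union> prod.swap ` small_mult_pairs B A X"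
    proof (cases "real a \<le> sqrt X")
      case False
      have "real b \<le> sqrt X"
      proof (rule ccontr)
        assume "\<not> real b \<le> sqrt X"
        then have "sqrt X * sqrt X < real a * real b"
          using False real_sqrt_ge_zero[OF assms(3)] by (intro mult_strict_mono) linarith+
        then show False
          using ab assms(3) unfolding mult_pairs_def by auto
      qed
      then show ?thesis
        using ab unfolding small_mult_pairs_def mult_pairs_def
        by (auto simp: image_iff mult.commute)
    qed (use ab in \<open>simp add: small_mult_pairs_def\<close>)
  qed
  moreover have "finite (small_mult_pairs A B X)" "finite (small_mult_pairs B A X)"
    using finite_mult_pairs assms unfolding small_mult_pairs_def by auto
  ultimately have "card (mult_pairs A B X)
      \<le> card (small_mult_pairs A B X) + card (prod.swap ` small_mult_pairs B A X)"
    by (meson card_Un_le card_mono finite_UnI finite_imageI order_trans)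
  then show ?thesis
    by (simp add: card_image)
qed

lemma card_small_mult_pairs_le_sum_cnt:
  assumes "0 \<notin> A" "0 \<notin> B"
  shows "card (small_mult_pairs A B X)
    \<le> (\<Sum>a\<in>{a\<in>A. 1 \<le> a \<and> real a \<le> sqrt X}. cnt B (X / real a))"
proof -
  define I where "I = {a\<in>A. 1 \<le> a \<and> real a \<le> sqrt X}"
  define J where "J a = {b\<in>B. 1 \<le> b \<and> real b \<le> X / real a}" for a :: nat
  have "small_mult_pairs A B X \<subseteq> Sigma I J"
  proof (rule subrelI)
    fix a b assume "(a, b) \<in> small_mult_pairs A B X"
    then have "a \<in> A" "b \<in> B" "real (a * b) \<le> X" "real a \<le> sqrt X"
      unfolding small_mult_pairs_def mult_pairs_def by auto
    moreover have "a \<noteq> 0" "b \<noteq> 0"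
      using calculation assms by (auto intro!: gr0I)
    ultimately show "(a, b) \<in> Sigma I J"
      unfolding I_def J_def by (auto simp: pos_le_divide_eq mult.commute)
  qed
  moreover have "finite I" "\<And>a. finite (J a)"
    unfolding I_def J_def by (rule finite_bounded_nat_set)+
  ultimately have "card (small_mult_pairs A B X) \<le> card (Sigma I J)"
    by (intro card_mono) auto
  also have "\<dots> = (\<Sum>a\<in>I. card (J a))"
    using \<open>finite I\<close> \<open>\<And>a. finite (J a)\<close> by simp
  finally show ?thesis
    unfolding I_def J_def cnt_def .
qed


lemma cnt_div_le:
  fixes B :: "nat set" and T C b X x :: real
  assumes "\<And>Y. Y \<ge> T \<Longrightarrow> real (cnt B Y) \<le> C * sqrt Y / ln Y powr b"
    and "C \<ge> 0" "1 < X" "T \<le> sqrt X" "1 \<le> x" "x \<le> sqrt X"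
  shows "real (cnt B (X / x)) \<le> C * 2 powr \<bar>b\<bar> * ln X powr (-b) * sqrt X * (1 / sqrt x)"
proof -
  have "sqrt X = X / sqrt X"
    using assms(3) by (simp add: real_div_sqrt)
  also have "\<dots> \<le> X / x"
    using assms(3,5,6) by (intro divide_left_mono) auto
  finally have "real (cnt B (X / x)) \<le> C * (sqrt (X / x) / ln (X / x) powr b)"
    using assms(1)[of "X / x"] assms(4) by simp
  also have "\<dots> \<le> C * (2 powr \<bar>b\<bar> * ln X powr (-b) * sqrt X * (1 / sqrt x))"
    using sqrt_div_ln_powr_le[OF assms(3,5,6)] assms(2) by (intro mult_left_mono) auto
  finally show ?thesis
    by (simp add: mult_ac)
qed

lemma card_small_mult_pairs_bound:
  fixes A B :: "nat set" and a b C :: real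
  assumes "0 \<notin> A" "0 \<notin> B" "a < 1" "C > 0"
    and "\<forall>\<^sub>F X in at_top. real (cnt A X) \<le> C * sqrt X / ln X powr a"
    and "\<forall>\<^sub>F X in at_top. real (cnt B X) \<le> C * sqrt X / ln X powr b"
  shows "\<exists>K>0. \<forall>\<^sub>F X in at_top.
    real (card (small_mult_pairs A B X)) \<le> K * sqrt X * ln X powr (1 - a - b)"
proof -
  obtain K where "K > 0" and K: "\<forall>\<^sub>F Y in at_top. recip_sqrt_sum A Y \<le> K * ln Y powr (1 - a)"
    using recip_sqrt_sum_bound[OF assms(3) _ assms(5)] assms(4) by auto
  obtain T where T: "\<And>Y. Y \<ge> T \<Longrightarrow> real (cnt B Y) \<le> C * sqrt Y / ln Y powr b"
    using assms(6) unfolding eventually_at_top_linorder by blast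
  have "\<forall>\<^sub>F X in at_top. recip_sqrt_sum A (sqrt X) \<le> K * ln (sqrt X) powr (1 - a) \<and> max T 2 \<le> sqrt X"
    using eventually_compose_filterlim[OF eventually_conj[OF K eventually_ge_at_top] sqrt_at_top] .
  then have "\<forall>\<^sub>F X in at_top.
    real (card (small_mult_pairs A B X)) \<le> C * 2 powr \<bar>b\<bar> * K * sqrt X * ln X powr (1 - a - b)"
  proof (rule eventually_mono, safe)
    fix X assume sum_le: "recip_sqrt_sum A (sqrt X) \<le> K * ln (sqrt X) powr (1 - a)"
      and sqrt_ge: "max T 2 \<le> sqrt X"
    have "X > 1"
      using sqrt_ge real_sqrt_le_1_iff[of X] by linarith
    define I where "I = {x\<in>A. 1 \<le> x \<and> real x \<le> sqrt X}"
    define c where "c = C * 2 powr \<bar>b\<bar> * ln X powr (-b) * sqrt X"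
    have "real (cnt B (X / real x)) \<le> c * (1 / sqrt (real x))" if "x \<in> I" for x
      using cnt_div_le[of T B C b X "real x", OF T] that sqrt_ge \<open>X > 1\<close> assms(4)
      unfolding c_def I_def by auto
    then have "real (card (small_mult_pairs A B X)) \<le> (\<Sum>x\<in>I. c * (1 / sqrt (real x)))"
      using card_small_mult_pairs_le_sum_cnt[OF assms(1,2), of X] unfolding I_def
      by (smt (verit) of_nat_le_iff of_nat_sum sum_mono)
    also have "\<dots> = c * recip_sqrt_sum A (sqrt X)"
      unfolding recip_sqrt_sum_def I_def by (simp add: sum_distrib_left)
    also have "\<dots> \<le> c * (K * ln X powr (1 - a))"
    proof (intro mult_left_mono)
      have "ln (sqrt X) powr (1 - a) \<le> ln X powr (1 - a)"
        using \<open>X > 1\<close> assms(3) by (intro powr_mono2) (auto simp: ln_sqrt)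
      then show "recip_sqrt_sum A (sqrt X) \<le> K * ln X powr (1 - a)"
        using sum_le \<open>K > 0\<close> by (smt (verit) mult_left_mono)
    qed (use \<open>X > 1\<close> assms(4) in \<open>simp add: c_def\<close>)
    also have "\<dots> = C * 2 powr \<bar>b\<bar> * K * sqrt X * ln X powr (1 - a - b)"
      using powr_add[of "ln X" "-b" "1 - a"] unfolding c_def by (simp add: mult_ac)
    finally show "real (card (small_mult_pairs A B X))
      \<le> C * 2 powr \<bar>b\<bar> * K * sqrt X * ln X powr (1 - a - b)" .
  qed
  moreover have "C * 2 powr \<bar>b\<bar> * K > 0"
    using assms(4) \<open>K > 0\<close> by simp
  ultimately show ?thesis
    by (metis mult.assoc)
qed


theorem lemma2p1:
  fixes A B :: "nat set" and \<alpha> \<beta> C :: real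
  assumes "0 \<notin> A" and "0 \<notin> B"
    and "\<alpha> < 1" and "\<beta> < 1"
    and "C > 0"
    and "\<forall>\<^sub>F X in at_top. real (cnt A X) \<le> C * sqrt X / (ln X) powr \<alpha>"
    and "\<forall>\<^sub>F X in at_top. real (cnt B X) \<le> C * sqrt X / (ln X) powr \<beta>"
  shows "\<exists>C'>0. \<forall>\<^sub>F X in at_top.
           cnt (setmul A B) X \<le> card {(a, b). a \<in> A \<and> b \<in> B \<and> real (a * b) \<le> X}
         \<and> real (card {(a, b). a \<in> A \<and> b \<in> B \<and> real (a * b) \<le> X})
             \<le> C' * sqrt X * (ln X) powr (1 - \<alpha> - \<beta>)"
proof -
  obtain K1 where "K1 > 0" and K1: "\<forall>\<^sub>F X in at_top.
      real (card (small_mult_pairs A B X)) \<le> K1 * sqrt X * ln X powr (1 - \<alpha> - \<beta>)"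
    using card_small_mult_pairs_bound[OF assms(1,2,3,5,6,7)] by blast
  obtain K2 where "K2 > 0" and K2: "\<forall>\<^sub>F X in at_top.
      real (card (small_mult_pairs B A X)) \<le> K2 * sqrt X * ln X powr (1 - \<beta> - \<alpha>)"
    using card_small_mult_pairs_bound[OF assms(2,1,4,5,7,6)] by blast
  have "\<forall>\<^sub>F X in at_top.
      cnt (setmul A B) X \<le> card (mult_pairs A B X)
    \<and> real (card (mult_pairs A B X)) \<le> (K1 + K2) * sqrt X * ln X powr (1 - \<alpha> - \<beta>)"
    using K1 K2 eventually_ge_at_top[of 0]
  proof eventually_elim
    case (elim X)
    then show ?case
      using cnt_setmul_le_card_mult_pairs[OF assms(1,2)] card_mult_pairs_le_small[OF assms(1,2)]
      by (force simp: algebra_simps)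
  qed
  then show ?thesis
    using \<open>K1 > 0\<close> \<open>K2 > 0\<close> unfolding mult_pairs_def by (intro exI[of _ "K1 + K2"]) auto
qed

end
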